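(* Let $S\subseteq\mathbb{R}^{n-1}$ and let $P\in\mathbb{R}[\mathbf{x};x_n]$ have degree $d_n$ in $x_n$, $P=\sum_{k=0}^{d_n}c_k(\mathbf{x})x_n^k$. (1) If $c_{d_n}$ does not vanish at any point of $S$, then $P$ is projectively delineable on $S$ if and only if $P$ is delineable on $S$. (2) If $S$ is connected, $c_{d_n}$ vanishes identically on $S$, and $P$ is projectively delineable on $S$, then $P$ is delineable on $S$.
   Context: Write $\mathbf{x}=(x_1,\dots,x_{n-1})$; $E_{\mathbf{x}_0}P$ is the univariate polynomial in $x_n$ obtained by substituting $\mathbf{x}_0$ for $\mathbf{x}$. $\mathbb{RP}^1$ is the quotient of $\mathbb{R}^2\setminus\{(0,0)\}$ by proportionality with the quotient topology; $(u:v)$ is the class of $(u,v)$; $\infty=(1:0)$. With $d=\deg_{x_n}P$, $H^d(P)(\mathbf{x},x_n,y)=\sum_kc_k(\mathbf{x})x_n^ky^{d-k}$. A projective root of a binary form $g(u,v)$ is $(u_0:v_0)$ with $g(u_0,v_0)=0$, with multiplicity (for $g\ne0$) the largest $m$ such that $(v_0u-u_0v)^m$ divides $g$; projective roots of $E_{\mathbf{x}}P$ w.r.t. $d$ are those of $E_{\mathbf{x}}H^d(P)$. $Z_{\mathbb{R}}(P,S)=\{(\mathbf{x},x_n)\in S\times\mathbb{R}:P(\mathbf{x},x_n)=0\}$, $Z_{\mathbb{RP}^1}(P,S)=\{(\mathbf{x},(x_n:y))\in S\times\mathbb{RP}^1:H^d(P)(\mathbf{x},x_n,y)=0\}$. $P$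 is delineable on $S$ if there are $k\in\mathbb{N}$ and continuous $\theta_1,\dots,\theta_k:S\to\mathbb{R}$ with $Z_{\mathbb{R}}(P,S)$ the disjoint union of their graphs and, for each $l$, an $m_l\ge1$ such that $\theta_l(\mathbf{x})$ is a root of $E_{\mathbf{x}}P$ of multiplicity $m_l$ for all $\mathbf{x}\in S$. $P$ is projectively delineable on $S$ if there are $k\in\mathbb{N}$ and continuous $\theta_1,\dots,\theta_k:S\to\mathbb{RP}^1$ with $Z_{\mathbb{RP}^1}(P,S)$ the disjoint union of their graphs and, for each $l$, an $m_l\ge1$ such that $\theta_l(\mathbf{x})$ is a projective root of $E_{\mathbf{x}}P$ (w.r.t. $d$) of multiplicity $m_l$ for all $\mathbf{x}\in S$. *)

theory Defs
  imports "HOL-Analysis.Analysis" "HOL-Computational_Algebra.Polynomial"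
begin

text \<open>Real polynomial functions on R^(n-1) (= real multivariate polynomials, since R is infinite).
  The index type 'm plays the role of {1..n-1}.\<close>
inductive real_poly_fun :: "(real^'m \<Rightarrow> real) \<Rightarrow> bool" where
  const: "real_poly_fun (\<lambda>x. a)"
| coord: "real_poly_fun (\<lambda>x. x $ i)"
| add: "real_poly_fun f \<Longrightarrow> real_poly_fun g \<Longrightarrow> real_poly_fun (\<lambda>x. f x + g x)"
| mult: "real_poly_fun f \<Longrightarrow> real_poly_fun g \<Longrightarrow> real_poly_fun (\<lambda>x. f x * g x)"

text \<open>A polynomial P in R[x; x_n] is given by its coefficient family c, P = sum_k c_k(x) x_n^k,
  where every c_k is a polynomial function and only finitely many c_k are nonzero.\<close>
definition is_poly_xn :: "(nat \<Rightarrow> real^'m \<Rightarrow> real) \<Rightarrow> bool" where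
  "is_poly_xn c \<longleftrightarrow> (\<forall>k. real_poly_fun (c k)) \<and> finite {k. c k \<noteq> (\<lambda>_. 0)}"

definition deg_xn :: "(nat \<Rightarrow> real^'m \<Rightarrow> real) \<Rightarrow> nat" where
  "deg_xn c = (if \<exists>k. c k \<noteq> (\<lambda>_. 0) then Max {k. c k \<noteq> (\<lambda>_. 0)} else 0)"

definition evalP :: "(nat \<Rightarrow> real^'m \<Rightarrow> real) \<Rightarrow> real^'m \<Rightarrow> real poly" where
  "evalP c x = Poly (map (\<lambda>k. c k x) [0..<Suc (deg_xn c)])"

text \<open>Bivariate polynomials in (u,v) are represented as real poly poly: outer variable u,
  inner variable v.\<close>
definition bf_eval :: "real poly poly \<Rightarrow> real \<Rightarrow> real \<Rightarrow> real" where
  "bf_eval g u v = poly (poly g [:u:]) v"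

text \<open>E_x H^d(P)(x, u, v) = sum_k c_k(x) u^k v^(d-k) with d = deg_{x_n} P.\<close>
definition homog :: "(nat \<Rightarrow> real^'m \<Rightarrow> real) \<Rightarrow> real^'m \<Rightarrow> real poly poly" where
  "homog c x = (\<Sum>k\<le>deg_xn c. monom (monom (c k x) (deg_xn c - k)) k)"

text \<open>The linear form v0*u - u0*v.\<close>
definition lin_form :: "real \<Rightarrow> real \<Rightarrow> real poly poly" where
  "lin_form u0 v0 = [: [:0, - u0:], [:v0:] :]"

text \<open>Points of RP^1 are represented as the proportionality classes themselves.\<close>
definition proj_class :: "real \<times> real \<Rightarrow> (real \<times> real) set" where
  "proj_class p = {(t * fst p, t * snd p) | t. t \<noteq> 0}"

definition RP1 :: "(real \<times> real) set set" where
  "RP1 = proj_class ` (UNIV - {(0, 0)})"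

definition proj_inf :: "(real \<times> real) set" where
  "proj_inf = proj_class (1, 0)"

text \<open>Quotient topology on RP^1 from R^2 minus the origin (which is open in R^2).\<close>
definition RP1_top :: "(real \<times> real) set topology" where
  "RP1_top = topology (\<lambda>U. U \<subseteq> RP1 \<and> open {p. p \<noteq> (0, 0) \<and> proj_class p \<in> U})"

lemma istopology_RP1: "istopology (\<lambda>U. U \<subseteq> RP1 \<and> open {p. p \<noteq> (0, 0) \<and> proj_class p \<in> U})"
proof -
  have 1: "{p. p \<noteq> (0, 0) \<and> proj_class p \<in> S \<inter> T} =
           {p. p \<noteq> (0, 0) \<and> proj_class p \<in> S} \<inter> {p. p \<noteq> (0, 0) \<and> proj_class p \<in> T}" for S T
    by auto
  have 2: "{p. p \<noteq> (0, 0) \<and> proj_class p \<in> \<Union>K} =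
           (\<Union>U\<in>K. {p. p \<noteq> (0, 0) \<and> proj_class p \<in> U})" for K
    by auto
  show ?thesis
    unfolding istopology_def 1 2 by auto
qed

definition proj_root_mult :: "real poly poly \<Rightarrow> (real \<times> real) set \<Rightarrow> nat \<Rightarrow> bool" where
  "proj_root_mult g p m \<longleftrightarrow> (\<exists>u0 v0. (u0, v0) \<noteq> (0, 0) \<and> p = proj_class (u0, v0) \<and>
      g \<noteq> 0 \<and> bf_eval g u0 v0 = 0 \<and>
      lin_form u0 v0 ^ m dvd g \<and> (\<forall>m'. lin_form u0 v0 ^ m' dvd g \<longrightarrow> m' \<le> m))"

definition root_mult :: "real poly \<Rightarrow> real \<Rightarrow> nat \<Rightarrow> bool" where
  "root_mult q a m \<longleftrightarrow> q \<noteq> 0 \<and> poly q a = 0 \<and> order a q = m"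

definition Z_R :: "(nat \<Rightarrow> real^'m \<Rightarrow> real) \<Rightarrow> (real^'m) set \<Rightarrow> ((real^'m) \<times> real) set" where
  "Z_R c S = {(x, t). x \<in> S \<and> poly (evalP c x) t = 0}"

definition Z_RP1 :: "(nat \<Rightarrow> real^'m \<Rightarrow> real) \<Rightarrow> (real^'m) set \<Rightarrow> ((real^'m) \<times> (real \<times> real) set) set" where
  "Z_RP1 c S = {(x, proj_class (a, b)) | x a b. x \<in> S \<and> (a, b) \<noteq> (0, 0) \<and> bf_eval (homog c x) a b = 0}"

definition delineable :: "(nat \<Rightarrow> real^'m \<Rightarrow> real) \<Rightarrow> (real^'m) set \<Rightarrow> bool" where
  "delineable c S \<longleftrightarrow> (\<exists>(k::nat) (\<theta>::nat \<Rightarrow> real^'m \<Rightarrow> real).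
      (\<forall>l<k. continuous_on S (\<theta> l)) \<and>
      Z_R c S = {(x, \<theta> l x) | x l. x \<in> S \<and> l < k} \<and>
      (\<forall>x\<in>S. \<forall>i<k. \<forall>j<k. i \<noteq> j \<longrightarrow> \<theta> i x \<noteq> \<theta> j x) \<and>
      (\<forall>l<k. \<exists>m\<ge>1. \<forall>x\<in>S. root_mult (evalP c x) (\<theta> l x) m))"

definition proj_delineable :: "(nat \<Rightarrow> real^'m \<Rightarrow> real) \<Rightarrow> (real^'m) set \<Rightarrow> bool" where
  "proj_delineable c S \<longleftrightarrow> (\<exists>(k::nat) (\<theta>::nat \<Rightarrow> real^'m \<Rightarrow> (real \<times> real) set).
      (\<forall>l<k. continuous_map (top_of_set S) RP1_top (\<theta> l)) \<and>
      Z_RP1 c S = {(x, \<theta> l x) | x l. x \<in> S \<and> l < k} \<and>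
      (\<forall>x\<in>S. \<forall>i<k. \<forall>j<k. i \<noteq> j \<longrightarrow> \<theta> i x \<noteq> \<theta> j x) \<and>
      (\<forall>l<k. \<exists>m\<ge>1. \<forall>x\<in>S. proj_root_mult (homog c x) (\<theta> l x) m))"

end

theory Submission
  imports Defs
begin

text \<open>The affine chart t \<mapsto> (t : 1) is a homeomorphism from the real line onto RP1 minus
  \<infinity> = (1 : 0); it sends the real roots of E_x P to the projective roots other than \<infinity>, and
  dehomogenisation shows that it preserves multiplicities. The point \<infinity> is a projective root
  exactly when the leading coefficient c_d vanishes. Hence if c_d has no zero on S no branch
  passes through \<infinity>, and delineations and projective delineations correspond via the chart.
  If c_d vanishes on S, \<infinity> is a projective root at every point; the set where a given branch
  equals \<infinity> is closed, and open because near it all other branches stay away from \<infinity>. On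
  a connected S one branch is therefore constantly \<infinity>, and the remaining branches, read in the
  affine chart, delineate P.\<close>

section \<open>Taylor shifts\<close>

lemma pcompose_monom: "pcompose (monom a k) r = smult a (r ^ k)"
proof -
  have "pcompose ([:0,1:] ^ k) r = r ^ k"
    by (induct k) (simp_all add: pcompose_mult pcompose_1 pcompose_pCons)
  then show ?thesis by (simp add: monom_altdef pcompose_smult)
qed

lemma pcompose_power: "pcompose (p ^ n) q = pcompose p q ^ n"
  by (induct n) (simp_all add: pcompose_mult pcompose_1)

lemma coeff_monic_linear_poly_power:
  fixes b :: "'a::comm_ring_1"
  shows "coeff ([:b,1:] ^ k) j = of_nat (k choose j) * b ^ (k - j)"
proof (cases "j \<le> k")
  case True
  then show ?thesis by (simp add: coeff_linear_poly_power)
next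
  case False
  have "degree ([:b,1:] ^ k) \<le> k * 1"
    by (rule order.trans[OF degree_power_le]) simp
  with False show ?thesis by (simp add: coeff_eq_0 binomial_eq_0)
qed

lemma coeff_pcompose_linear_shift:
  fixes p :: "'a::comm_ring_1 poly"
  assumes "degree p \<le> N"
  shows "coeff (pcompose p [:b,1:]) j = (\<Sum>k\<le>N. coeff p k * (of_nat (k choose j) * b ^ (k - j)))"
proof -
  have "pcompose p [:b,1:] = (\<Sum>k\<le>N. smult (coeff p k) ([:b,1:] ^ k))"
    by (subst poly_as_sum_of_monoms'[OF assms, symmetric]) (simp add: pcompose_sum pcompose_monom)
  then show ?thesis by (simp add: coeff_sum coeff_monic_linear_poly_power)
qed

lemma linear_power_dvd_iff_coeff_shift:
  fixes p :: "'a::comm_ring_1 poly"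
  shows "[:-b,1:] ^ m dvd p \<longleftrightarrow> (\<forall>j<m. coeff (pcompose p [:b,1:]) j = 0)"
proof -
  have shift: "pcompose [:-b,1:] [:b,1:] = [:0,1:]"
    and unshift: "pcompose [:b,1:] [:-b,1:] = [:0,1:]"
    by (simp_all add: pcompose_pCons)
  have "[:-b,1:] ^ m dvd p \<longleftrightarrow> [:0,1:] ^ m dvd pcompose p [:b,1:]"
  proof
    assume "[:-b,1:] ^ m dvd p"
    then obtain h where "p = [:-b,1:] ^ m * h" by (elim dvdE)
    then have "pcompose p [:b,1:] = [:0,1:] ^ m * pcompose h [:b,1:]"
      by (simp add: pcompose_mult pcompose_power shift)
    then show "[:0,1:] ^ m dvd pcompose p [:b,1:]" by simp
  next
    assume "[:0,1:] ^ m dvd pcompose p [:b,1:]"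
    then obtain h where h: "pcompose p [:b,1:] = [:0,1:] ^ m * h" by (elim dvdE)
    have "p = pcompose (pcompose p [:b,1:]) [:-b,1:]"
      by (simp add: pcompose_assoc[symmetric] unshift)
    also have "\<dots> = [:-b,1:] ^ m * pcompose h [:-b,1:]"
      by (simp add: h pcompose_mult pcompose_power pcompose_pCons)
    finally show "[:-b,1:] ^ m dvd p" by (metis dvd_triv_left)
  qed
  also have "\<dots> \<longleftrightarrow> (\<forall>j<m. coeff (pcompose p [:b,1:]) j = 0)"
    using monom_1_dvd_iff'[of m] by (simp add: monom_altdef)
  finally show ?thesis .
qed

lemma smult_dvd_iff_unit:
  assumes "a * b = 1"
  shows "smult a p dvd q \<longleftrightarrow> p dvd q"
proof -
  have "p = smult a p * [:b:]" using assms by (simp add: mult.commute)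
  then have "smult a p dvd p" by (metis dvd_triv_left)
  moreover have "p dvd smult a p" by (metis dvd_smult dvd_refl)
  ultimately show ?thesis using dvd_trans by blast
qed

section \<open>Homogenisation in x_n\<close>

lemma coeff_evalP: "coeff (evalP c x) k = (if k \<le> deg_xn c then c k x else 0)"
  by (auto simp: evalP_def nth_default_def simp del: upt_Suc)

lemma degree_evalP_le: "degree (evalP c x) \<le> deg_xn c"
  by (rule degree_le) (simp add: coeff_evalP)

lemma poly_evalP: "poly (evalP c x) t = (\<Sum>k\<le>deg_xn c. c k x * t ^ k)"
proof -
  have "evalP c x = (\<Sum>k\<le>deg_xn c. monom (c k x) k)"
    by (rule poly_eqI) (simp add: coeff_evalP coeff_sum coeff_monom)
  then show ?thesis by (simp add: poly_sum poly_monom)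
qed

lemma coeff_homog:
  "coeff (homog c x) k = (if k \<le> deg_xn c then monom (c k x) (deg_xn c - k) else 0)"
  by (simp add: homog_def coeff_sum coeff_monom)

lemma degree_homog_le: "degree (homog c x) \<le> deg_xn c"
  by (rule degree_le) (simp add: coeff_homog)

lemma bf_eval_homog: "bf_eval (homog c x) a b = (\<Sum>k\<le>deg_xn c. c k x * a ^ k * b ^ (deg_xn c - k))"
  by (simp add: bf_eval_def homog_def poly_sum poly_monom poly_const_pow mult_ac)

lemma homog_eq_0_iff: "homog c x = 0 \<longleftrightarrow> evalP c x = 0"
  by (simp add: poly_eq_iff coeff_homog coeff_evalP)

lemma bf_eval_homog_affine: "bf_eval (homog c x) r 1 = poly (evalP c x) r"
  by (simp add: bf_eval_homog poly_evalP)

lemma bf_eval_homog_infinity: "bf_eval (homog c x) a 0 = c (deg_xn c) x * a ^ deg_xn c"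
proof -
  have "(\<Sum>k\<le>deg_xn c. c k x * a ^ k * (0::real) ^ (deg_xn c - k))
      = (\<Sum>k\<in>{deg_xn c}. c k x * a ^ k * (0::real) ^ (deg_xn c - k))"
    by (rule sum.mono_neutral_right) auto
  then show ?thesis by (simp add: bf_eval_homog)
qed

lemma bf_eval_homog_scale:
  "bf_eval (homog c x) (t * a) (t * b) = t ^ deg_xn c * bf_eval (homog c x) a b"
proof -
  have "c k x * (t*a) ^ k * (t*b) ^ (deg_xn c - k) = t ^ deg_xn c * (c k x * a ^ k * b ^ (deg_xn c - k))"
    if "k \<le> deg_xn c" for k
  proof -
    have "t ^ k * t ^ (deg_xn c - k) = t ^ deg_xn c"
      using that by (simp add: power_add[symmetric])
    then show ?thesis by (simp add: power_mult_distrib)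
  qed
  then show ?thesis
    unfolding bf_eval_homog sum_distrib_left by (intro sum.cong) auto
qed

text \<open>Substituting u := u + r v turns u - r v into u, and coefficient j (in u) of the shifted
  form is v^(d-j) times coefficient j of the Taylor shift of evalP c x at r; so both sides say
  that these coefficients vanish for j < m.\<close>
lemma lin_form_power_dvd_homog_iff:
  "lin_form r 1 ^ m dvd homog c x \<longleftrightarrow> [:-r,1:] ^ m dvd evalP c x"
proof -
  define d where "d = deg_xn c"
  define T where "T j = (\<Sum>k\<le>d. c k x * (of_nat (k choose j) * r ^ (k - j)))" for j
  have lin: "lin_form r 1 = [:-[:0,r:], 1:]" by (simp add: lin_form_def one_pCons)
  have r_monom: "[:0, r:] ^ n = monom (r ^ n) n" for n
  proof -
    have "[:0, r:] = monom r 1" by (simp add: monom_altdef)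
    then show ?thesis by (simp add: monom_power)
  qed
  have shifted_homog: "coeff (pcompose (homog c x) [:[:0,r:],1:]) j = monom (T j) (d - j)" for j
  proof -
    have "coeff (pcompose (homog c x) [:[:0,r:],1:]) j
        = (\<Sum>k\<le>d. coeff (homog c x) k * (of_nat (k choose j) * [:0,r:] ^ (k - j)))"
      by (rule coeff_pcompose_linear_shift) (simp add: degree_homog_le d_def)
    also have "\<dots> = (\<Sum>k\<le>d. monom (c k x * (of_nat (k choose j) * r ^ (k - j))) (d - j))"
    proof (rule sum.cong[OF refl])
      fix k assume k: "k \<in> {..d}"
      show "coeff (homog c x) k * (of_nat (k choose j) * [:0, r:] ^ (k - j)) =
          monom (c k x * (of_nat (k choose j) * r ^ (k - j))) (d - j)"
      proof (cases "j \<le> k")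
        case True
        then have "d - k + (k - j) = d - j" using k by auto
        then show ?thesis using k
          by (simp add: coeff_homog d_def[symmetric] r_monom of_nat_poly smult_monom
              mult_monom mult_ac)
      next
        case False
        then show ?thesis by (simp add: binomial_eq_0)
      qed
    qed
    also have "\<dots> = monom (T j) (d - j)" by (simp add: T_def monom_sum)
    finally show ?thesis .
  qed
  have shifted_evalP: "coeff (pcompose (evalP c x) [:r,1:]) j = T j" for j
    unfolding T_def by (subst coeff_pcompose_linear_shift[OF degree_evalP_le]) (simp add: coeff_evalP d_def)
  show ?thesis
    unfolding lin linear_power_dvd_iff_coeff_shift shifted_homog shifted_evalP by simp
qed

section \<open>The real projective line\<close>

lemma proj_class_self: "(a, b) \<in> proj_class (a, b)"
  unfolding proj_class_def by (auto intro!: exI[of _ 1])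

lemma proj_class_eqD:
  "proj_class (a, b) = proj_class (a', b') \<Longrightarrow> \<exists>t. t \<noteq> 0 \<and> a = t * a' \<and> b = t * b'"
  using proj_class_self[of a b] unfolding proj_class_def by auto

lemma proj_class_scale: "t \<noteq> 0 \<Longrightarrow> proj_class (t * a, t * b) = proj_class (a, b)"
  unfolding proj_class_def
  by (auto simp: mult.assoc) (metis (no_types) divide_eq_0_iff nonzero_eq_divide_eq)

lemma proj_class_affine_inj: "proj_class (r, 1) = proj_class (r', 1) \<Longrightarrow> r = r'"
  using proj_class_eqD[of r 1 r' 1] by auto

lemma proj_class_eq_proj_inf_iff:
  assumes "(a, b) \<noteq> (0, 0)"
  shows "proj_class (a, b) = proj_inf \<longleftrightarrow> b = 0"
proof
  assume "proj_class (a, b) = proj_inf"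
  then show "b = 0" using proj_class_eqD[of a b 1 0] by (auto simp: proj_inf_def)
next
  assume "b = 0"
  then show "proj_class (a, b) = proj_inf"
    using assms proj_class_scale[of a 1 0] by (simp add: proj_inf_def)
qed

lemma proj_class_affine_neq_proj_inf: "proj_class (r, 1) \<noteq> proj_inf"
  using proj_class_eq_proj_inf_iff[of r 1] by simp

lemma proj_class_in_RP1: "p \<noteq> (0, 0) \<Longrightarrow> proj_class p \<in> RP1"
  unfolding RP1_def by auto

text \<open>The affine coordinate r of (r : 1); at \<infinity> its value is unspecified.\<close>
definition affine_coord :: "(real \<times> real) set \<Rightarrow> real" where
  "affine_coord P = (SOME r. P = proj_class (r, 1))"

lemma affine_coord_proj_class [simp]: "affine_coord (proj_class (r, 1)) = r"
  unfolding affine_coord_def by (rule some_equality) (auto intro: proj_class_affine_inj)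

lemma RP1_affine_cases:
  assumes "P \<in> RP1" "P \<noteq> proj_inf"
  shows "P = proj_class (affine_coord P, 1)"
proof -
  obtain a b where ab: "(a, b) \<noteq> (0, 0)" "P = proj_class (a, b)"
    using assms(1) unfolding RP1_def by auto
  then have "b \<noteq> 0" using proj_class_eq_proj_inf_iff assms(2) by auto
  then have "P = proj_class (a / b, 1)"
    using ab proj_class_scale[of b "a / b" 1] by simp
  then show ?thesis by simp
qed

lemma lin_form_scale_power_dvd_iff:
  assumes "t \<noteq> 0"
  shows "lin_form (t * r) t ^ n dvd g \<longleftrightarrow> lin_form r 1 ^ n dvd g"
proof -
  have "lin_form (t * r) t ^ n = smult ([:t:] ^ n) (lin_form r 1 ^ n)"
    by (simp add: lin_form_def smult_power[symmetric] mult.commute)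
  moreover have "[:t:] ^ n * [:1/t:] ^ n = 1"
    using assms by (simp add: power_mult_distrib[symmetric] poly_const_pow one_pCons)
  ultimately show ?thesis by (simp add: smult_dvd_iff_unit)
qed

lemma proj_root_mult_affine_iff:
  assumes "m \<ge> 1"
  shows "proj_root_mult (homog c x) (proj_class (r, 1)) m \<longleftrightarrow> root_mult (evalP c x) r m"
proof
  assume "proj_root_mult (homog c x) (proj_class (r, 1)) m"
  then obtain u0 v0 where uv: "proj_class (r, 1) = proj_class (u0, v0)" "homog c x \<noteq> 0"
     "lin_form u0 v0 ^ m dvd homog c x" "\<forall>m'. lin_form u0 v0 ^ m' dvd homog c x \<longrightarrow> m' \<le> m"
    unfolding proj_root_mult_def by blast
  obtain t where "t \<noteq> 0" "u0 = t * r" "v0 = t"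
    using proj_class_eqD[OF uv(1)[symmetric]] by auto
  then have dvd_iff: "lin_form u0 v0 ^ n dvd homog c x \<longleftrightarrow> [:-r,1:] ^ n dvd evalP c x" for n
    using lin_form_scale_power_dvd_iff lin_form_power_dvd_homog_iff by simp
  have nonzero: "evalP c x \<noteq> 0" using uv(2) homog_eq_0_iff[of c x] by simp
  have "\<not> [:-r,1:] ^ Suc m dvd evalP c x"
    using uv(4) dvd_iff by (metis Suc_n_not_le_n)
  then have order: "order r (evalP c x) = m"
    using uv(3) dvd_iff by (intro order_unique_lemma) auto
  moreover have "poly (evalP c x) r = 0"
    using order assms nonzero order_root by fastforce
  ultimately show "root_mult (evalP c x) r m" unfolding root_mult_def using nonzero by simp
next
  assume "root_mult (evalP c x) r m"
  then have q: "evalP c x \<noteq> 0" "poly (evalP c x) r = 0" "order r (evalP c x) = m"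
    unfolding root_mult_def by auto
  show "proj_root_mult (homog c x) (proj_class (r, 1)) m"
    unfolding proj_root_mult_def
  proof (intro exI conjI allI impI)
    show "homog c x \<noteq> 0" using q homog_eq_0_iff[of c x] by simp
    show "bf_eval (homog c x) r 1 = 0" using q(2) bf_eval_homog_affine[of c x r] by simp
    show "lin_form r 1 ^ m dvd homog c x"
      using lin_form_power_dvd_homog_iff[of r m c x] order_1[of r "evalP c x"] q by simp
    fix m' assume "lin_form r 1 ^ m' dvd homog c x"
    then show "m' \<le> m" using lin_form_power_dvd_homog_iff q order_divides by metis
  qed simp_all
qed

lemma openin_RP1_top:
  "openin RP1_top U \<longleftrightarrow> U \<subseteq> RP1 \<and> open {p. p \<noteq> (0, 0) \<and> proj_class p \<in> U}"
  unfolding RP1_top_def topology_inverse'[OF istopology_RP1] by simp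

lemma topspace_RP1_top: "topspace RP1_top = RP1"
proof -
  have "{p. p \<noteq> (0, 0) \<and> proj_class p \<in> RP1} = - {(0, 0)}"
    using proj_class_in_RP1 by auto
  then have "openin RP1_top RP1" unfolding openin_RP1_top by (simp add: open_Compl)
  then show ?thesis unfolding topspace_def by (auto simp: openin_RP1_top)
qed

lemma continuous_map_proj_class_affine:
  assumes "continuous_on S f"
  shows "continuous_map (top_of_set S) RP1_top (\<lambda>x. proj_class (f x, 1))"
  unfolding continuous_map_def topspace_RP1_top
proof (intro conjI allI impI)
  show "(\<lambda>x. proj_class (f x, 1)) \<in> topspace (top_of_set S) \<rightarrow> RP1"
    using proj_class_in_RP1 by auto
  fix U assume "openin RP1_top U"
  then have "open {p. p \<noteq> (0, 0) \<and> proj_class p \<in> U}" unfolding openin_RP1_top by simp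
  moreover have "continuous_on S (\<lambda>x. (f x, 1::real))" using assms by (intro continuous_intros)
  ultimately have "openin (top_of_set S) (S \<inter> (\<lambda>x. (f x, 1::real)) -` {p. p \<noteq> (0, 0) \<and> proj_class p \<in> U})"
    using continuous_openin_preimage_gen by blast
  moreover have "S \<inter> (\<lambda>x. (f x, 1::real)) -` {p. p \<noteq> (0, 0) \<and> proj_class p \<in> U}
      = {x \<in> topspace (top_of_set S). proj_class (f x, 1) \<in> U}" by auto
  ultimately show "openin (top_of_set S) {x \<in> topspace (top_of_set S). proj_class (f x, 1) \<in> U}"
    by simp
qed

lemma closedin_RP1_top_proj_inf: "closedin RP1_top {proj_inf}"
proof -
  have "{p. p \<noteq> (0, 0) \<and> proj_class p \<in> RP1 - {proj_inf}} = {p. snd p \<noteq> 0}"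
  proof (rule set_eqI)
    fix p :: "real \<times> real"
    obtain a b where "p = (a, b)" by (cases p)
    then show "p \<in> {p. p \<noteq> (0, 0) \<and> proj_class p \<in> RP1 - {proj_inf}} \<longleftrightarrow> p \<in> {p. snd p \<noteq> 0}"
      using proj_class_in_RP1[of "(a, b)"] proj_class_eq_proj_inf_iff[of a b] by auto
  qed
  moreover have "open {p::real \<times> real. snd p \<noteq> 0}"
    by (intro open_Collect_neq continuous_intros)
  ultimately have "openin RP1_top (RP1 - {proj_inf})" unfolding openin_RP1_top by simp
  moreover have "proj_inf \<in> RP1" unfolding proj_inf_def by (simp add: proj_class_in_RP1)
  ultimately show ?thesis by (simp add: closedin_def topspace_RP1_top insert_absorb)
qed

text \<open>Open sets of the affine chart r \<mapsto> (r:1) are open in RP1: their preimages in the punctured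
  plane are preimages of the open map (a, b) \<mapsto> a / b on the half planes b \<noteq> 0.\<close>
lemma openin_RP1_top_affine_image:
  assumes "open B"
  shows "openin RP1_top ((\<lambda>r. proj_class (r, 1)) ` B)"
proof -
  let ?U = "(\<lambda>r. proj_class (r, 1)) ` B"
  have "{p. p \<noteq> (0, 0) \<and> proj_class p \<in> ?U} = {p. snd p \<noteq> 0} \<inter> (\<lambda>p. fst p / snd p) -` B"
  proof (rule set_eqI)
    fix p :: "real \<times> real"
    obtain a b where p: "p = (a, b)" by (cases p)
    show "p \<in> {p. p \<noteq> (0, 0) \<and> proj_class p \<in> ?U} \<longleftrightarrow> p \<in> {p. snd p \<noteq> 0} \<inter> (\<lambda>p. fst p / snd p) -` B"
    proof (cases "b = 0")
      case True
      have "proj_class p = proj_inf" if "p \<noteq> (0, 0)"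
        using that p True proj_class_eq_proj_inf_iff[of a b] by simp
      then show ?thesis using p True proj_class_affine_neq_proj_inf by auto
    next
      case False
      then have "proj_class (a, b) = proj_class (a / b, 1)"
        using proj_class_scale[of b "a / b" 1] by simp
      then show ?thesis using p False by (auto dest: proj_class_affine_inj)
    qed
  qed
  moreover have "open ({p. snd p \<noteq> 0} \<inter> (\<lambda>p::real \<times> real. fst p / snd p) -` B)"
    using assms by (intro continuous_open_preimage open_Collect_neq continuous_intros) auto
  moreover have "?U \<subseteq> RP1" using proj_class_in_RP1 by auto
  ultimately show ?thesis unfolding openin_RP1_top by simp
qed

lemma continuous_on_affine_coord:
  assumes "continuous_map (top_of_set S) RP1_top F" "\<forall>x\<in>S. F x \<noteq> proj_inf"
  shows "continuous_on S (\<lambda>x. affine_coord (F x))"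
proof -
  have chart: "F x \<in> (\<lambda>r. proj_class (r, 1)) ` B \<longleftrightarrow> affine_coord (F x) \<in> B"
    if "x \<in> S" for x B
  proof -
    have "F x \<in> RP1"
      using continuous_map_image_subset_topspace[OF assms(1)] that by (auto simp: topspace_RP1_top)
    then have "F x = proj_class (affine_coord (F x), 1)"
      using assms(2) that by (intro RP1_affine_cases) auto
    then obtain a where "F x = proj_class (a, 1)" ..
    then show ?thesis by (auto dest: proj_class_affine_inj)
  qed
  have "openin (top_of_set S) {x \<in> topspace (top_of_set S). affine_coord (F x) \<in> B}"
    if "openin euclidean B" for B
  proof -
    have "{x \<in> topspace (top_of_set S). affine_coord (F x) \<in> B}
        = {x \<in> topspace (top_of_set S). F x \<in> (\<lambda>r. proj_class (r, 1)) ` B}"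
      using chart by auto
    then show ?thesis
      using openin_continuous_map_preimage[OF assms(1) openin_RP1_top_affine_image] that by simp
  qed
  then have "continuous_map (top_of_set S) euclidean (\<lambda>x. affine_coord (F x))"
    unfolding continuous_map_def by simp
  then show ?thesis by simp
qed

section \<open>Zero sets and delineations\<close>

lemma mem_Z_RP1_iff:
  assumes "x \<in> S" "(a, b) \<noteq> (0, 0)"
  shows "(x, proj_class (a, b)) \<in> Z_RP1 c S \<longleftrightarrow> bf_eval (homog c x) a b = 0"
proof
  assume "(x, proj_class (a, b)) \<in> Z_RP1 c S"
  then obtain a' b' where "proj_class (a, b) = proj_class (a', b')" "bf_eval (homog c x) a' b' = 0"
    unfolding Z_RP1_def by auto
  then show "bf_eval (homog c x) a b = 0"
    using proj_class_eqD bf_eval_homog_scale by (metis mult_zero_right)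
next
  assume "bf_eval (homog c x) a b = 0"
  then show "(x, proj_class (a, b)) \<in> Z_RP1 c S" unfolding Z_RP1_def using assms by auto
qed

lemma mem_Z_RP1_proj_inf_iff: "x \<in> S \<Longrightarrow> (x, proj_inf) \<in> Z_RP1 c S \<longleftrightarrow> c (deg_xn c) x = 0"
  unfolding proj_inf_def by (simp add: mem_Z_RP1_iff bf_eval_homog_infinity)

lemma mem_Z_RP1_affine_iff: "x \<in> S \<Longrightarrow> (x, proj_class (r, 1)) \<in> Z_RP1 c S \<longleftrightarrow> poly (evalP c x) r = 0"
  by (simp add: mem_Z_RP1_iff bf_eval_homog_affine)

lemma mem_Z_RP1D: "(x, P) \<in> Z_RP1 c S \<Longrightarrow> x \<in> S"
  unfolding Z_RP1_def by auto

lemma Z_RP1_affine_point: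
  assumes "(x, P) \<in> Z_RP1 c S" "P \<noteq> proj_inf"
  shows "P = proj_class (affine_coord P, 1)" "poly (evalP c x) (affine_coord P) = 0"
proof -
  obtain a b where ab: "x \<in> S" "(a, b) \<noteq> (0, 0)" "P = proj_class (a, b)"
    using assms(1) unfolding Z_RP1_def by auto
  then have "P \<in> RP1" using proj_class_in_RP1 by simp
  then show P: "P = proj_class (affine_coord P, 1)"
    using assms(2) by (rule RP1_affine_cases)
  show "poly (evalP c x) (affine_coord P) = 0"
    using assms(1) ab(1) P mem_Z_RP1_affine_iff by metis
qed

text \<open>The set of points where the branch through p sits at p is closed, and it is open because
  near such a point every other branch stays away from p.\<close>
lemma connected_space_branch_constant:
  assumes "connected_space X" "finite I" "closedin Y {p}"
    and cont: "\<And>l. l \<in> I \<Longrightarrow> continuous_map X Y (f l)"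
    and dist: "\<And>x i j. x \<in> topspace X \<Longrightarrow> i \<in> I \<Longrightarrow> j \<in> I \<Longrightarrow> i \<noteq> j \<Longrightarrow> f i x \<noteq> f j x"
    and hit: "\<And>x. x \<in> topspace X \<Longrightarrow> \<exists>l\<in>I. f l x = p"
    and "x0 \<in> topspace X" "l0 \<in> I" "f l0 x0 = p"
  shows "\<forall>x\<in>topspace X. f l0 x = p"
proof -
  let ?A = "{x \<in> topspace X. f l0 x \<in> {p}}"
  have "closedin X ?A"
    using cont assms(3,8) by (intro closedin_continuous_map_preimage) auto
  moreover have "openin X ?A"
  proof -
    have "?A = (\<Inter>j \<in> I - {l0}. {x \<in> topspace X. f j x \<in> topspace Y - {p}}) \<inter> topspace X"
      using dist hit assms(8) continuous_map_funspace[OF cont] by fastforce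
    moreover have "openin X {x \<in> topspace X. f j x \<in> topspace Y - {p}}" if "j \<in> I" for j
      using cont that assms(3) by (intro openin_continuous_map_preimage) auto
    ultimately show ?thesis using assms(2) by auto
  qed
  moreover have "?A \<noteq> {}" using assms(7,9) by auto
  ultimately have "?A = topspace X"
    using assms(1) unfolding connected_space_clopen_in by blast
  then show ?thesis by auto
qed

lemma proj_delineable_if_delineable:
  fixes c :: "nat \<Rightarrow> real^'m \<Rightarrow> real"
  assumes "delineable c S" and leading: "\<forall>x\<in>S. c (deg_xn c) x \<noteq> 0"
  shows "proj_delineable c S"
proof -
  obtain k :: nat and \<theta> where cont: "\<forall>l<k. continuous_on S (\<theta> l)"
    and Z: "Z_R c S = {(x, \<theta> l x) | x l. x \<in> S \<and> l < k}"
    and dist: "\<forall>x\<in>S. \<forall>i<k. \<forall>j<k. i \<noteq> j \<longrightarrow> \<theta> i x \<noteq> \<theta> j x"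
    and mult: "\<forall>l<k. \<exists>m\<ge>1. \<forall>x\<in>S. root_mult (evalP c x) (\<theta> l x) m"
    using assms(1) unfolding delineable_def by blast
  define \<Theta> where "\<Theta> l x = proj_class (\<theta> l x, 1)" for l x
  show ?thesis unfolding proj_delineable_def
  proof (intro exI conjI)
    show "\<forall>l<k. continuous_map (top_of_set S) RP1_top (\<Theta> l)"
      unfolding \<Theta>_def using cont continuous_map_proj_class_affine by blast
    show "Z_RP1 c S = {(x, \<Theta> l x) | x l. x \<in> S \<and> l < k}"
    proof (rule set_eqI)
      fix z :: "(real^'m) \<times> (real \<times> real) set"
      obtain x P where z: "z = (x, P)" by (cases z)
      have "z \<in> Z_RP1 c S \<longleftrightarrow> x \<in> S \<and> (\<exists>t. P = proj_class (t, 1) \<and> (x, t) \<in> Z_R c S)"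
      proof
        assume zZ: "z \<in> Z_RP1 c S"
        then have "x \<in> S" unfolding z by (rule mem_Z_RP1D)
        then have "P \<noteq> proj_inf" using zZ z leading mem_Z_RP1_proj_inf_iff by metis
        then show "x \<in> S \<and> (\<exists>t. P = proj_class (t, 1) \<and> (x, t) \<in> Z_R c S)"
          using Z_RP1_affine_point zZ z \<open>x \<in> S\<close> unfolding Z_R_def by blast
      qed (auto simp: z Z_R_def mem_Z_RP1_affine_iff)
      also have "\<dots> \<longleftrightarrow> z \<in> {(x, \<Theta> l x) | x l. x \<in> S \<and> l < k}"
        unfolding z Z \<Theta>_def by (auto dest: proj_class_affine_inj)
      finally show "z \<in> Z_RP1 c S \<longleftrightarrow> z \<in> {(x, \<Theta> l x) | x l. x \<in> S \<and> l < k}" .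
    qed
    show "\<forall>x\<in>S. \<forall>i<k. \<forall>j<k. i \<noteq> j \<longrightarrow> \<Theta> i x \<noteq> \<Theta> j x"
      unfolding \<Theta>_def using dist proj_class_affine_inj by metis
    show "\<forall>l<k. \<exists>m\<ge>1. \<forall>x\<in>S. proj_root_mult (homog c x) (\<Theta> l x) m"
      unfolding \<Theta>_def using mult proj_root_mult_affine_iff by metis
  qed
qed

lemma delineable_if_affine_branches:
  fixes \<Theta> :: "'i \<Rightarrow> real^'m \<Rightarrow> (real \<times> real) set"
  assumes "finite I"
    and cont: "\<forall>l\<in>I. continuous_map (top_of_set S) RP1_top (\<Theta> l)"
    and Z: "{z \<in> Z_RP1 c S. snd z \<noteq> proj_inf} = {(x, \<Theta> l x) | x l. x \<in> S \<and> l \<in> I}"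
    and dist: "\<forall>x\<in>S. \<forall>i\<in>I. \<forall>j\<in>I. i \<noteq> j \<longrightarrow> \<Theta> i x \<noteq> \<Theta> j x"
    and mult: "\<forall>l\<in>I. \<exists>m\<ge>1. \<forall>x\<in>S. proj_root_mult (homog c x) (\<Theta> l x) m"
  shows "delineable c S"
proof -
  obtain h where h: "bij_betw h {0..<card I} I"
    using ex_bij_betw_nat_finite[OF assms(1)] by blast
  have h_image: "h ` {..<card I} = I" and h_inj: "inj_on h {..<card I}"
    using h by (simp_all add: bij_betw_def atLeast0LessThan)
  have branch: "(x, \<Theta> l x) \<in> Z_RP1 c S" "\<Theta> l x \<noteq> proj_inf" if "x \<in> S" "l \<in> I" for x l
  proof -
    have "(x, \<Theta> l x) \<in> {z \<in> Z_RP1 c S. snd z \<noteq> proj_inf}"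
      unfolding Z using that by blast
    then show "(x, \<Theta> l x) \<in> Z_RP1 c S" "\<Theta> l x \<noteq> proj_inf" by simp_all
  qed
  define \<theta> where "\<theta> j x = affine_coord (\<Theta> (h j) x)" for j x
  have affine_branch: "\<Theta> (h j) x = proj_class (\<theta> j x, 1)" "poly (evalP c x) (\<theta> j x) = 0"
    if "x \<in> S" "j < card I" for x j
  proof -
    have "h j \<in> I" using that(2) h_image by blast
    then have "(x, \<Theta> (h j) x) \<in> Z_RP1 c S" "\<Theta> (h j) x \<noteq> proj_inf"
      using branch that(1) by blast+
    then show "\<Theta> (h j) x = proj_class (\<theta> j x, 1)" "poly (evalP c x) (\<theta> j x) = 0"
      unfolding \<theta>_def by (rule Z_RP1_affine_point)+
  qed
  show ?thesis unfolding delineable_def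
  proof (intro exI conjI)
    show "\<forall>j<card I. continuous_on S (\<theta> j)"
      unfolding \<theta>_def using cont branch h_image continuous_on_affine_coord by blast
    show "Z_R c S = {(x, \<theta> j x) | x j. x \<in> S \<and> j < card I}"
    proof (rule set_eqI)
      fix z :: "(real^'m) \<times> real"
      obtain x t where z: "z = (x, t)" by (cases z)
      have "z \<in> Z_R c S \<longleftrightarrow> x \<in> S \<and> poly (evalP c x) t = 0"
        unfolding z Z_R_def by simp
      also have "\<dots> \<longleftrightarrow> (x, proj_class (t, 1)) \<in> {z \<in> Z_RP1 c S. snd z \<noteq> proj_inf}"
        using mem_Z_RP1_affine_iff[of x S t c] mem_Z_RP1D[of x "proj_class (t, 1)" c S]
          proj_class_affine_neq_proj_inf[of t] by auto
      also have "\<dots> \<longleftrightarrow> x \<in> S \<and> (\<exists>l\<in>h ` {..<card I}. proj_class (t, 1) = \<Theta> l x)"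
        unfolding Z h_image by blast
      also have "\<dots> \<longleftrightarrow> x \<in> S \<and> (\<exists>j<card I. proj_class (t, 1) = \<Theta> (h j) x)"
        by blast
      also have "\<dots> \<longleftrightarrow> z \<in> {(x, \<theta> j x) | x j. x \<in> S \<and> j < card I}"
        using affine_branch z by (auto dest!: proj_class_affine_inj)
      finally show "z \<in> Z_R c S \<longleftrightarrow> z \<in> {(x, \<theta> j x) | x j. x \<in> S \<and> j < card I}" .
    qed
    show "\<forall>x\<in>S. \<forall>i<card I. \<forall>j<card I. i \<noteq> j \<longrightarrow> \<theta> i x \<noteq> \<theta> j x"
    proof (intro ballI allI impI)
      fix x i j assume "x \<in> S" "i < card I" "j < card I" "i \<noteq> j"
      moreover from this have "h i \<in> I" "h j \<in> I" "h i \<noteq> h j"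
        using h_image h_inj by (auto simp: inj_on_def)
      ultimately have "\<Theta> (h i) x \<noteq> \<Theta> (h j) x"
        using dist by blast
      then show "\<theta> i x \<noteq> \<theta> j x"
        using affine_branch \<open>x \<in> S\<close> \<open>i < card I\<close> \<open>j < card I\<close> by metis
    qed
    show "\<forall>j<card I. \<exists>m\<ge>1. \<forall>x\<in>S. root_mult (evalP c x) (\<theta> j x) m"
    proof (intro allI impI)
      fix j assume j: "j < card I"
      then obtain m where "m \<ge> 1" "\<forall>x\<in>S. proj_root_mult (homog c x) (\<Theta> (h j) x) m"
        using mult h_image by blast
      then show "\<exists>m\<ge>1. \<forall>x\<in>S. root_mult (evalP c x) (\<theta> j x) m"
        using affine_branch j proj_root_mult_affine_iff by metis
    qed
  qed
qed

lemma delineable_if_proj_delineable_leading_nonzero: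
  fixes c :: "nat \<Rightarrow> real^'m \<Rightarrow> real"
  assumes "proj_delineable c S" and leading: "\<forall>x\<in>S. c (deg_xn c) x \<noteq> 0"
  shows "delineable c S"
proof -
  obtain k :: nat and \<Theta> where cont: "\<forall>l<k. continuous_map (top_of_set S) RP1_top (\<Theta> l)"
    and Z: "Z_RP1 c S = {(x, \<Theta> l x) | x l. x \<in> S \<and> l < k}"
    and dist: "\<forall>x\<in>S. \<forall>i<k. \<forall>j<k. i \<noteq> j \<longrightarrow> \<Theta> i x \<noteq> \<Theta> j x"
    and mult: "\<forall>l<k. \<exists>m\<ge>1. \<forall>x\<in>S. proj_root_mult (homog c x) (\<Theta> l x) m"
    using assms(1) unfolding proj_delineable_def by (elim exE conjE) iprover
  have "snd z \<noteq> proj_inf" if "z \<in> Z_RP1 c S" for z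
  proof -
    obtain x P where z: "z = (x, P)" by (cases z)
    then have "x \<in> S" using that mem_Z_RP1D by blast
    then show ?thesis using that z leading mem_Z_RP1_proj_inf_iff[of x S c] by auto
  qed
  then have "{z \<in> Z_RP1 c S. snd z \<noteq> proj_inf} = Z_RP1 c S" by blast
  also have "\<dots> = {(x, \<Theta> l x) | x l. x \<in> S \<and> l \<in> {..<k}}"
    unfolding Z by simp
  finally show ?thesis
    using cont dist mult by (intro delineable_if_affine_branches[of "{..<k}"]) auto
qed

lemma delineable_if_proj_delineable_leading_zero:
  fixes c :: "nat \<Rightarrow> real^'m \<Rightarrow> real"
  assumes "connected S" and leading: "\<forall>x\<in>S. c (deg_xn c) x = 0" and "proj_delineable c S"
  shows "delineable c S"
proof (cases "S = {}")
  case True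
  then show ?thesis
    unfolding delineable_def Z_R_def by (intro exI[of _ 0]) auto
next
  case False
  then obtain x0 where x0: "x0 \<in> S" by blast
  obtain k :: nat and \<Theta> where cont: "\<forall>l<k. continuous_map (top_of_set S) RP1_top (\<Theta> l)"
    and Z: "Z_RP1 c S = {(x, \<Theta> l x) | x l. x \<in> S \<and> l < k}"
    and dist: "\<forall>x\<in>S. \<forall>i<k. \<forall>j<k. i \<noteq> j \<longrightarrow> \<Theta> i x \<noteq> \<Theta> j x"
    and mult: "\<forall>l<k. \<exists>m\<ge>1. \<forall>x\<in>S. proj_root_mult (homog c x) (\<Theta> l x) m"
    using assms(3) unfolding proj_delineable_def by (elim exE conjE) iprover
  have at_inf: "\<exists>l\<in>{..<k}. \<Theta> l x = proj_inf" if "x \<in> S" for x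
  proof -
    have "(x, proj_inf) \<in> Z_RP1 c S" using that leading mem_Z_RP1_proj_inf_iff by blast
    then show ?thesis unfolding Z by auto
  qed
  then obtain l0 where l0: "l0 < k" "\<Theta> l0 x0 = proj_inf" using x0 by auto
  have "connected_space (top_of_set S)"
    using assms(1) by (simp add: connected_space_subtopology)
  then have "\<forall>x\<in>topspace (top_of_set S). \<Theta> l0 x = proj_inf"
    by (rule connected_space_branch_constant[where I="{..<k}"])
      (use closedin_RP1_top_proj_inf cont dist at_inf x0 l0 in auto)
  then have l0_inf: "\<forall>x\<in>S. \<Theta> l0 x = proj_inf" by simp
  have finite_branch: "\<Theta> l x \<noteq> proj_inf" if "x \<in> S" "l < k" "l \<noteq> l0" for x l
    using dist l0_inf l0(1) that by metis
  have "{z \<in> Z_RP1 c S. snd z \<noteq> proj_inf} = {(x, \<Theta> l x) | x l. x \<in> S \<and> l \<in> {..<k} - {l0}}"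
  proof (rule set_eqI)
    fix z :: "(real^'m) \<times> (real \<times> real) set"
    obtain x P where z: "z = (x, P)" by (cases z)
    have "z \<in> {z \<in> Z_RP1 c S. snd z \<noteq> proj_inf} \<longleftrightarrow> x \<in> S \<and> (\<exists>l<k. P = \<Theta> l x) \<and> P \<noteq> proj_inf"
      unfolding z Z by auto
    also have "\<dots> \<longleftrightarrow> x \<in> S \<and> (\<exists>l. l < k \<and> l \<noteq> l0 \<and> P = \<Theta> l x)"
      using finite_branch l0_inf by auto
    also have "\<dots> \<longleftrightarrow> z \<in> {(x, \<Theta> l x) | x l. x \<in> S \<and> l \<in> {..<k} - {l0}}"
      unfolding z by auto
    finally show "z \<in> {z \<in> Z_RP1 c S. snd z \<noteq> proj_inf} \<longleftrightarrow> z \<in> {(x, \<Theta> l x) | x l. x \<in> S \<and> l \<in> {..<k} - {l0}}" .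
  qed
  then show ?thesis
    using cont dist mult by (intro delineable_if_affine_branches[of "{..<k} - {l0}"]) auto
qed

theorem mainTheorem6:
  fixes c :: "nat \<Rightarrow> real^'m \<Rightarrow> real" and S :: "(real^'m) set"
  assumes "is_poly_xn c"
  shows "((\<forall>x\<in>S. c (deg_xn c) x \<noteq> 0) \<longrightarrow> (proj_delineable c S \<longleftrightarrow> delineable c S))
       \<and> ((connected S \<and> (\<forall>x\<in>S. c (deg_xn c) x = 0) \<and> proj_delineable c S) \<longrightarrow> delineable c S)"
  using proj_delineable_if_delineable delineable_if_proj_delineable_leading_nonzero
    delineable_if_proj_delineable_leading_zero by blast

end
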